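(* Let $N\in\mathbb{N}^*$ and let $W$ be a symmetric $N\times N$ random matrix whose entries on and above the diagonal are i.i.d. centred Gaussian with some variance $\sigma^2>0$. For $T\in\mathbb{N}^*$ let $B_{T,N}$ be its generalised matrix of moments of order $T$, with eigenvalues $\lambda_T(B_{T,N})\le\cdots\le\lambda_0(B_{T,N})=\lambda_{\max}(B_{T,N})$. Then \[ \frac{\lambda_{\max}(B_{T,N})}{\sum_{i=0}^T\lambda_i(B_{T,N})}\xrightarrow[T\to\infty]{}1, \qquad\text{and}\qquad \lambda_{\max}(B_{T,N})\simeq B_{T,N}(T,T)\ \text{ as } T\to\infty. \]
   Context: Generalised matrix of moments: for $i\in[N]$, $\beta_{i,0}=1$, $\beta_{i,l}=\sum_{i_1,\ldots,i_l=1}^N W_{ii_1}\cdots W_{i_{l-1}i_l}$ for $l\ge1$, and $B_{T,N}(l_1,l_2)=\mathbb{E}\sum_{i=1}^N\beta_{i,l_1}\beta_{i,l_2}$. $x_T\simeq y_T$ means $x_T/y_T\to1$. *)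

theory Defs
  imports "HOL-Probability.Probability" "Jordan_Normal_Form.Char_Poly"
begin

text \<open>Gaussian symmetric N x N matrix: the independent entries are indexed by
  pairs (i,j) with i \<le> j < N (indices 0..N-1 instead of 1..N), each distributed
  as a centred normal with standard deviation sigma (variance sigma^2).\<close>

definition upper_idx :: "nat \<Rightarrow> (nat \<times> nat) set" where
  "upper_idx N = {(i, j). i \<le> j \<and> j < N}"

definition gauss_entries :: "nat \<Rightarrow> real \<Rightarrow> ((nat \<times> nat) \<Rightarrow> real) measure" where
  "gauss_entries N \<sigma> = PiM (upper_idx N) (\<lambda>_. density lborel (normal_density 0 \<sigma>))"

definition Wmat :: "((nat \<times> nat) \<Rightarrow> real) \<Rightarrow> nat \<Rightarrow> nat \<Rightarrow> real" where
  "Wmat x i j = x (min i j, max i j)"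

text \<open>beta_{i,l} = sum over i_1..i_l in [N] of W_{i i_1} W_{i_1 i_2} ... W_{i_{l-1} i_l};
  an index path is p on {1..l} with p 0 := i. For l = 0 the sum is over the single
  empty path and the empty product is 1.\<close>

definition beta :: "nat \<Rightarrow> ((nat \<times> nat) \<Rightarrow> real) \<Rightarrow> nat \<Rightarrow> nat \<Rightarrow> real" where
  "beta N x i l = (\<Sum>p \<in> PiE {1..l} (\<lambda>_. {..<N}).
      \<Prod>k\<in>{1..l}. Wmat x ((p(0 := i)) (k - 1)) ((p(0 := i)) k))"

definition Bent :: "nat \<Rightarrow> real \<Rightarrow> nat \<Rightarrow> nat \<Rightarrow> real" where
  "Bent N \<sigma> l1 l2 = (\<integral>x. (\<Sum>i<N. beta N x i l1 * beta N x i l2) \<partial>gauss_entries N \<sigma>)"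

definition Bmat :: "nat \<Rightarrow> nat \<Rightarrow> real \<Rightarrow> real mat" where
  "Bmat T N \<sigma> = mat (Suc T) (Suc T) (\<lambda>(l1, l2). Bent N \<sigma> l1 l2)"

definition lambda_max :: "real mat \<Rightarrow> real" where
  "lambda_max A = Max {k. eigenvalue A k}"

definition eig_sum :: "real mat \<Rightarrow> real" where
  "eig_sum A = (\<Sum>k\<in>{k. eigenvalue A k}. of_nat (order k (char_poly A)) * k)"

end

theory Submission
  imports Defs "Jordan_Normal_Form.Schur_Decomposition"
begin

unbundle no vec_syntax and no inner_syntax

text \<open>Since W is symmetric, B(a,b) = E<W^a 1, W^b 1> depends only on a + b, so B is a
  positive semidefinite Hankel matrix. Its diagonal u_k = B(k,k) is log-convex
  (Cauchy-Schwarz for B(k+1,k+1) = B(k,k+2)) and grows faster than every geometric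
  sequence (on the event of positive probability that all entries exceed a, the integrand
  of u_k is at least (aN)^(2k)), so the ratios
  u_(k+1)/u_k tend to infinity and u_T dominates the sum of all earlier diagonal entries.
  For a positive semidefinite matrix, lambda_max <= tr B and
  u_T^2 <= tr(B^2) = sum of lambda_i^2 <= lambda_max tr B; as tr B = u_T (1 + o(1)),
  both ratios are squeezed to 1.\<close>

section \<open>Path sums as iterated matrix-vector products\<close>

fun moment_vec :: "((nat \<times> nat) \<Rightarrow> real) \<Rightarrow> nat \<Rightarrow> nat \<Rightarrow> nat \<Rightarrow> real" where
  "moment_vec x N 0 i = 1"
| "moment_vec x N (Suc l) i = (\<Sum>j<N. Wmat x i j * moment_vec x N l j)"

text \<open>beta with the path anchored at position a instead of 0, so that induction on the
  length can peel off the first step.\<close>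

definition path_sum_from :: "((nat \<times> nat) \<Rightarrow> real) \<Rightarrow> nat \<Rightarrow> nat \<Rightarrow> nat \<Rightarrow> nat \<Rightarrow> real" where
  "path_sum_from x N a l i = (\<Sum>p \<in> PiE {Suc a..a+l} (\<lambda>_. {..<N}).
      \<Prod>k\<in>{Suc a..a+l}. Wmat x ((p(a := i)) (k - 1)) ((p(a := i)) k))"

lemma path_sum_from_Suc:
  "path_sum_from x N a (Suc l) i = (\<Sum>j<N. Wmat x i j * path_sum_from x N (Suc a) l j)"
proof -
  let ?S = "{Suc (Suc a)..Suc a + l}"
  have indices: "{Suc a..a + Suc l} = insert (Suc a) ?S" by auto
  have nin: "Suc a \<notin> ?S" by auto
  let ?F = "\<lambda>p. \<Prod>k\<in>{Suc a..a+Suc l}. Wmat x ((p(a := i)) (k - 1)) ((p(a := i)) k)"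
  have inj: "inj_on (\<lambda>(y, g). g(Suc a := y)) ({..<N} \<times> PiE ?S (\<lambda>_. {..<N}))"
    using inj_combinator[OF nin, of "\<lambda>_. {..<N}"] by simp
  have F: "?F (g(Suc a := y)) = Wmat x i y * (\<Prod>k\<in>?S. Wmat x ((g(Suc a := y)) (k - 1)) ((g(Suc a := y)) k))"
    for g y
  proof -
    have "?F (g(Suc a := y))
        = Wmat x i y * (\<Prod>k\<in>?S. Wmat x ((g(Suc a := y, a := i)) (k - 1)) ((g(Suc a := y, a := i)) k))"
      unfolding indices using nin by (simp add: prod.insert)
    also have "(\<Prod>k\<in>?S. Wmat x ((g(Suc a := y, a := i)) (k - 1)) ((g(Suc a := y, a := i)) k))
       = (\<Prod>k\<in>?S. Wmat x ((g(Suc a := y)) (k - 1)) ((g(Suc a := y)) k))"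
      by (rule prod.cong) auto
    finally show ?thesis .
  qed
  have "path_sum_from x N a (Suc l) i = sum ?F ((\<lambda>(y, g). g(Suc a := y)) ` ({..<N} \<times> PiE ?S (\<lambda>_. {..<N})))"
    unfolding path_sum_from_def indices PiE_insert_eq by simp
  also have "\<dots> = (\<Sum>y<N. \<Sum>g\<in>PiE ?S (\<lambda>_. {..<N}). ?F (g(Suc a := y)))"
    by (subst sum.reindex[OF inj]) (simp add: case_prod_unfold sum.cartesian_product)
  also have "\<dots> = (\<Sum>y<N. Wmat x i y * path_sum_from x N (Suc a) l y)"
    unfolding F path_sum_from_def by (simp add: sum_distrib_left)
  finally show ?thesis .
qed

lemma path_sum_from_eq_moment_vec: "path_sum_from x N a l i = moment_vec x N l i"
  by (induction l arbitrary: a i) (simp add: path_sum_from_def, simp add: path_sum_from_Suc)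

lemma beta_eq_moment_vec: "beta N x i l = moment_vec x N l i"
  using path_sum_from_eq_moment_vec[of x N 0 l i] unfolding path_sum_from_def beta_def by simp

lemma Wmat_commute: "Wmat x i j = Wmat x j i"
  unfolding Wmat_def by (simp add: min.commute max.commute)

definition has_all_moments :: "'a measure \<Rightarrow> ('a \<Rightarrow> real) \<Rightarrow> bool" where
  "has_all_moments M f \<longleftrightarrow> f \<in> borel_measurable M \<and> (\<forall>p::nat. integrable M (\<lambda>x. \<bar>f x\<bar> ^ p))"

lemma has_all_moments_const: "prob_space M \<Longrightarrow> has_all_moments M (\<lambda>_. c)"
  unfolding has_all_moments_def by (auto intro: finite_measure.integrable_const prob_space.finite_measure)

lemma has_all_moments_mult:
  assumes f: "has_all_moments M f" and g: "has_all_moments M g"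
  shows "has_all_moments M (\<lambda>x. f x * g x)"
  unfolding has_all_moments_def
proof (intro conjI allI)
  have [measurable]: "f \<in> borel_measurable M" "g \<in> borel_measurable M"
    using f g by (auto simp: has_all_moments_def)
  show "(\<lambda>x. f x * g x) \<in> borel_measurable M" by measurable
  fix p :: nat
  have i: "integrable M (\<lambda>x. \<bar>f x\<bar> ^ (2*p) + \<bar>g x\<bar> ^ (2*p))"
    using f g by (auto simp: has_all_moments_def)
  show "integrable M (\<lambda>x. \<bar>f x * g x\<bar> ^ p)"
  proof (rule Bochner_Integration.integrable_bound[OF i])
    show "(\<lambda>x. \<bar>f x * g x\<bar> ^ p) \<in> borel_measurable M" by measurable
    show "AE x in M. norm (\<bar>f x * g x\<bar> ^ p) \<le> norm (\<bar>f x\<bar> ^ (2*p) + \<bar>g x\<bar> ^ (2*p))"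
    proof (intro AE_I2)
      fix x
      let ?a = "\<bar>f x\<bar> ^ p" and ?b = "\<bar>g x\<bar> ^ p"
      have "0 \<le> (?a - ?b)^2" by simp
      then have "2*(?a*?b) \<le> ?a^2 + ?b^2" by (simp add: power2_eq_square algebra_simps)
      moreover have "0 \<le> ?a*?b" by simp
      ultimately have "?a * ?b \<le> ?a^2 + ?b^2" by linarith
      then show "norm (\<bar>f x * g x\<bar> ^ p) \<le> norm (\<bar>f x\<bar> ^ (2*p) + \<bar>g x\<bar> ^ (2*p))"
        by (simp add: abs_mult power_mult_distrib power_mult[symmetric] mult.commute)
    qed
  qed
qed

lemma has_all_moments_add:
  assumes f: "has_all_moments M f" and g: "has_all_moments M g"
  shows "has_all_moments M (\<lambda>x. f x + g x)"
  unfolding has_all_moments_def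
proof (intro conjI allI)
  have [measurable]: "f \<in> borel_measurable M" "g \<in> borel_measurable M"
    using f g by (auto simp: has_all_moments_def)
  show "(\<lambda>x. f x + g x) \<in> borel_measurable M" by measurable
  fix p :: nat
  have i: "integrable M (\<lambda>x. 2^p * (\<bar>f x\<bar> ^ p + \<bar>g x\<bar> ^ p))"
    using f g by (auto simp: has_all_moments_def)
  show "integrable M (\<lambda>x. \<bar>f x + g x\<bar> ^ p)"
  proof (rule Bochner_Integration.integrable_bound[OF i])
    show "(\<lambda>x. \<bar>f x + g x\<bar> ^ p) \<in> borel_measurable M" by measurable
    show "AE x in M. norm (\<bar>f x + g x\<bar> ^ p) \<le> norm (2^p * (\<bar>f x\<bar> ^ p + \<bar>g x\<bar> ^ p))"
    proof (intro AE_I2)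
      fix x
      let ?m = "max \<bar>f x\<bar> \<bar>g x\<bar>"
      have "\<bar>f x + g x\<bar> \<le> 2 * ?m" by linarith
      then have "\<bar>f x + g x\<bar> ^ p \<le> (2 * ?m) ^ p" by (rule power_mono) simp
      also have "\<dots> = 2^p * ?m^p" by (simp add: power_mult_distrib)
      also have "?m^p \<le> \<bar>f x\<bar> ^ p + \<bar>g x\<bar> ^ p"
        by (cases "\<bar>f x\<bar> \<le> \<bar>g x\<bar>") (auto simp: max_def)
      finally show "norm (\<bar>f x + g x\<bar> ^ p) \<le> norm (2^p * (\<bar>f x\<bar> ^ p + \<bar>g x\<bar> ^ p))"
        by simp
    qed
  qed
qed

lemma has_all_moments_sum:
  assumes "prob_space M" "\<And>i. i \<in> A \<Longrightarrow> has_all_moments M (f i)"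
  shows "has_all_moments M (\<lambda>x. \<Sum>i\<in>A. f i x)"
  using assms(2)
proof (induction A rule: infinite_finite_induct)
  case (insert a A)
  then show ?case by (simp add: has_all_moments_add)
qed (simp_all add: has_all_moments_const[OF assms(1)])

lemma has_all_moments_integrable:
  assumes "has_all_moments M f"
  shows "integrable M f"
proof -
  from assms have "f \<in> borel_measurable M" "integrable M (\<lambda>x. \<bar>f x\<bar> ^ 1)"
    unfolding has_all_moments_def by blast+
  then show ?thesis by (simp add: integrable_abs_iff)
qed

lemma prob_space_gauss_entries: "\<sigma> > 0 \<Longrightarrow> prob_space (gauss_entries N \<sigma>)"
  unfolding gauss_entries_def by (rule prob_space_PiM) (rule prob_space_normal_density)

lemma has_all_moments_gauss_entry:
  assumes \<sigma>: "\<sigma> > 0" and e: "e \<in> upper_idx N"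
  shows "has_all_moments (gauss_entries N \<sigma>) (\<lambda>x. x e)"
  unfolding has_all_moments_def
proof (intro conjI allI)
  let ?G = "density lborel (normal_density 0 \<sigma>)"
  have meas: "(\<lambda>x. x e) \<in> measurable (gauss_entries N \<sigma>) ?G"
    unfolding gauss_entries_def using e by (rule measurable_component_singleton)
  then show "(\<lambda>x. x e) \<in> borel_measurable (gauss_entries N \<sigma>)"
    by (simp add: measurable_def space_density sets_density)
  fix p :: nat
  have "integrable lborel (\<lambda>y. normal_density 0 \<sigma> y * \<bar>y - 0\<bar> ^ p)"
    using integrable_normal_moment_abs[OF \<sigma>] by blast
  then have "integrable ?G (\<lambda>y. \<bar>y\<bar> ^ p)"
    by (subst integrable_density) auto
  then have "integrable (distr (gauss_entries N \<sigma>) ?G (\<lambda>x. x e)) (\<lambda>y. \<bar>y\<bar> ^ p)"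
    unfolding gauss_entries_def
    by (subst distr_PiM_component[OF prob_space_normal_density[OF \<sigma>] e])
  then show "integrable (gauss_entries N \<sigma>) (\<lambda>x. \<bar>x e\<bar> ^ p)"
    using meas by (subst (asm) integrable_distr_eq) auto
qed

lemma has_all_moments_moment_vec:
  assumes \<sigma>: "\<sigma> > 0" and "i < N"
  shows "has_all_moments (gauss_entries N \<sigma>) (\<lambda>x. moment_vec x N l i)"
  using assms(2)
proof (induction l arbitrary: i)
  case 0
  then show ?case by (simp add: has_all_moments_const prob_space_gauss_entries[OF \<sigma>])
next
  case (Suc l)
  have "has_all_moments (gauss_entries N \<sigma>) (\<lambda>x. Wmat x i j)" if "j < N" for j
    unfolding Wmat_def using \<sigma> Suc.prems that
    by (intro has_all_moments_gauss_entry) (auto simp: upper_idx_def)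
  then show ?case
    using Suc.IH by (simp, intro has_all_moments_sum prob_space_gauss_entries[OF \<sigma>] has_all_moments_mult) auto
qed

section \<open>The moment matrix is a Hankel matrix of integrals of Gram sums\<close>

definition gram :: "((nat \<times> nat) \<Rightarrow> real) \<Rightarrow> nat \<Rightarrow> nat \<Rightarrow> nat \<Rightarrow> real" where
  "gram x N a b = (\<Sum>i<N. moment_vec x N a i * moment_vec x N b i)"

lemma integrable_gram: "\<sigma> > 0 \<Longrightarrow> integrable (gauss_entries N \<sigma>) (\<lambda>x. gram x N a b)"
  unfolding gram_def
  by (intro has_all_moments_integrable has_all_moments_sum prob_space_gauss_entries
      has_all_moments_mult has_all_moments_moment_vec) auto

lemma Bent_eq_integral_gram: "Bent N \<sigma> a b = (\<integral>x. gram x N a b \<partial>gauss_entries N \<sigma>)"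
  unfolding Bent_def gram_def beta_eq_moment_vec ..

lemma gram_Suc_right: "gram x N a (Suc b) = gram x N (Suc a) b"
proof -
  have "gram x N a (Suc b) = (\<Sum>i<N. \<Sum>j<N. moment_vec x N a i * Wmat x i j * moment_vec x N b j)"
    unfolding gram_def by (simp add: sum_distrib_left mult.assoc)
  also have "\<dots> = (\<Sum>j<N. \<Sum>i<N. Wmat x j i * moment_vec x N a i * moment_vec x N b j)"
    by (subst sum.swap) (simp add: Wmat_commute[of x _ j for j] mult_ac)
  also have "\<dots> = gram x N (Suc a) b"
    unfolding gram_def by (simp add: sum_distrib_right)
  finally show ?thesis .
qed

lemma gram_eq_gram_add: "gram x N a b = gram x N (a + b) 0"
  by (induction b arbitrary: a) (simp_all add: gram_Suc_right)

lemma Bent_hankel: "a + b = c + d \<Longrightarrow> Bent N \<sigma> a b = Bent N \<sigma> c d"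
  unfolding Bent_eq_integral_gram by (metis gram_eq_gram_add)

section \<open>Growth and log-convexity of the diagonal\<close>

lemma moment_vec_ge:
  assumes W: "\<And>i j. i < N \<Longrightarrow> j < N \<Longrightarrow> a \<le> Wmat x i j" and a: "0 \<le> a" and i: "i < N"
  shows "(a * N) ^ l \<le> moment_vec x N l i"
  using i
proof (induction l arbitrary: i)
  case 0 then show ?case by simp
next
  case (Suc l)
  have "(a * N) ^ Suc l = (\<Sum>j<N. a * (a * N) ^ l)" by (simp add: algebra_simps)
  also have "\<dots> \<le> (\<Sum>j<N. Wmat x i j * moment_vec x N l j)"
  proof (rule sum_mono)
    fix j assume "j \<in> {..<N}"
    then show "a * (a * real N) ^ l \<le> Wmat x i j * moment_vec x N l j"
      using W[OF Suc.prems, of j] Suc.IH[of j] a by (intro mult_mono) auto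
  qed
  finally show ?case by simp
qed

lemma gram_diag_nonneg: "0 \<le> gram x N k k"
  unfolding gram_def by (intro sum_nonneg) simp

lemma gram_diag_ge:
  assumes W: "\<And>i j. i < N \<Longrightarrow> j < N \<Longrightarrow> a \<le> Wmat x i j" and a: "0 \<le> a" and N: "1 \<le> N"
  shows "(a * N) ^ (2 * k) \<le> gram x N k k"
proof -
  have b: "(a * N) ^ k \<le> moment_vec x N k 0" using moment_vec_ge[OF W a, where i=0 and l=k] N by simp
  have "(a * N) ^ (2 * k) = ((a * N) ^ k)^2" by (simp add: power_mult mult.commute)
  also have "\<dots> \<le> (moment_vec x N k 0)^2" using b a by (intro power_mono) auto
  also have "\<dots> \<le> gram x N k k"
    unfolding gram_def power2_eq_square
    using N by (intro member_le_sum[where f="\<lambda>i. moment_vec x N k i * moment_vec x N k i"]) auto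
  finally show ?thesis .
qed

definition entries_box :: "nat \<Rightarrow> real \<Rightarrow> ((nat \<times> nat) \<Rightarrow> real) set" where
  "entries_box N a = PiE (upper_idx N) (\<lambda>_. {a..a+1})"

lemma finite_upper_idx: "finite (upper_idx N)"
  by (rule finite_subset[of _ "{..<N} \<times> {..<N}"]) (auto simp: upper_idx_def)

lemma entries_box_Wmat_ge: "x \<in> entries_box N a \<Longrightarrow> i < N \<Longrightarrow> j < N \<Longrightarrow> a \<le> Wmat x i j"
  unfolding entries_box_def Wmat_def upper_idx_def by (auto simp: PiE_iff)

lemma entries_box_sets: "entries_box N a \<in> sets (gauss_entries N \<sigma>)"
  unfolding entries_box_def gauss_entries_def
  by (rule sets_PiM_I_finite[OF finite_upper_idx]) auto

lemma emeasure_normal_unit_interval_pos: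
  assumes \<sigma>: "\<sigma> > 0" and a: "0 \<le> a"
  shows "0 < emeasure (density lborel (normal_density 0 \<sigma>)) {a..a+1}"
proof -
  let ?c = "normal_density 0 \<sigma> (a+1)"
  have le: "ennreal ?c * indicator {a..a+1} x \<le> ennreal (normal_density 0 \<sigma> x) * indicator {a..a+1} x" for x
  proof (cases "x \<in> {a..a+1}")
    case True
    then have "x^2 \<le> (a+1)^2" using a by (intro power_mono) auto
    then have "-((a+1)^2) / (2 * \<sigma>^2) \<le> -(x^2) / (2 * \<sigma>^2)"
      by (intro divide_right_mono) auto
    then have "?c \<le> normal_density 0 \<sigma> x"
      unfolding normal_density_def by (intro mult_left_mono) auto
    then show ?thesis using True by simp
  qed simp
  have "0 < ennreal ?c * emeasure lborel {a..a+1}"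
    using normal_density_pos[OF \<sigma>] by simp
  also have "\<dots> = (\<integral>\<^sup>+ x. ennreal ?c * indicator {a..a+1} x \<partial>lborel)"
    by (simp add: nn_integral_cmult_indicator)
  also have "\<dots> \<le> (\<integral>\<^sup>+ x. ennreal (normal_density 0 \<sigma> x) * indicator {a..a+1} x \<partial>lborel)"
    by (rule nn_integral_mono) (rule le)
  also have "\<dots> = emeasure (density lborel (normal_density 0 \<sigma>)) {a..a+1}"
    by (rule emeasure_density[symmetric]) auto
  finally show ?thesis .
qed

lemma measure_entries_box_pos:
  assumes \<sigma>: "\<sigma> > 0" and a: "0 \<le> a"
  shows "0 < measure (gauss_entries N \<sigma>) (entries_box N a)"
proof -
  interpret prob_space "gauss_entries N \<sigma>" by (rule prob_space_gauss_entries[OF \<sigma>])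
  let ?G = "density lborel (normal_density 0 \<sigma>)"
  have "emeasure (gauss_entries N \<sigma>) (entries_box N a)
     = emeasure (PiM (upper_idx N) (\<lambda>_. ?G))
         (prod_emb (upper_idx N) (\<lambda>_. ?G) (upper_idx N) (PiE (upper_idx N) (\<lambda>_. {a..a+1})))"
    unfolding gauss_entries_def entries_box_def by (subst prod_emb_PiE_same_index) auto
  also have "\<dots> = (\<Prod>i\<in>upper_idx N. emeasure ?G {a..a+1})"
    by (rule emeasure_PiM_emb) (auto simp: finite_upper_idx prob_space_normal_density[OF \<sigma>])
  also have "\<dots> \<noteq> 0"
    using emeasure_normal_unit_interval_pos[OF \<sigma> a] by simp
  finally show ?thesis by (simp add: emeasure_eq_measure order_less_le)
qed

lemma Bent_diag_ge:
  assumes \<sigma>: "\<sigma> > 0" and a: "0 \<le> a" and N: "1 \<le> N"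
  shows "measure (gauss_entries N \<sigma>) (entries_box N a) * (a * N) ^ (2 * k) \<le> Bent N \<sigma> k k"
proof -
  interpret prob_space "gauss_entries N \<sigma>" by (rule prob_space_gauss_entries[OF \<sigma>])
  let ?M = "gauss_entries N \<sigma>" and ?f = "\<lambda>x. (a * N) ^ (2 * k) * indicator (entries_box N a) x"
  have int: "integrable ?M ?f"
    using entries_box_sets emeasure_finite[of "entries_box N a"]
    by (intro integrable_mult_right integrable_real_indicator) (auto simp: less_top[symmetric])
  have "entries_box N a \<inter> space ?M = entries_box N a"
    using sets.sets_into_space[OF entries_box_sets] by blast
  then have "measure ?M (entries_box N a) * (a * N) ^ (2 * k) = (\<integral>x. ?f x \<partial>?M)"
    by simp
  also have "\<dots> \<le> (\<integral>x. gram x N k k \<partial>?M)"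
  proof (rule integral_mono[OF int integrable_gram[OF \<sigma>]])
    fix x
    show "?f x \<le> gram x N k k"
      using gram_diag_ge[OF entries_box_Wmat_ge a N, of x] gram_diag_nonneg[of x N k]
      by (cases "x \<in> entries_box N a") auto
  qed
  finally show ?thesis unfolding Bent_eq_integral_gram .
qed

lemma Bent_diag_exp_growth:
  assumes \<sigma>: "\<sigma> > 0" and N: "1 \<le> N" and C: "0 < C"
  shows "\<exists>c>0. \<forall>k. c * C ^ k \<le> Bent N \<sigma> k k"
proof -
  define a where "a = C + 1"
  have a: "0 \<le> a" "1 \<le> a" using C by (auto simp: a_def)
  have "C \<le> a * a" using C a by (simp add: a_def algebra_simps)
  also have "a * a \<le> (a * N) * (a * N)" using a N
    by (intro mult_mono) (auto simp: mult_le_cancel_left1)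
  finally have CaN: "C \<le> (a * N)^2" by (simp add: power2_eq_square)
  let ?c = "measure (gauss_entries N \<sigma>) (entries_box N a)"
  have "?c * C ^ k \<le> Bent N \<sigma> k k" for k
  proof -
    have "C ^ k \<le> ((a * N)^2) ^ k" using C CaN by (intro power_mono) auto
    then have "?c * C ^ k \<le> ?c * (a * N) ^ (2 * k)"
      using measure_entries_box_pos[OF \<sigma> a(1)] by (simp add: power_mult)
    also have "\<dots> \<le> Bent N \<sigma> k k" by (rule Bent_diag_ge[OF \<sigma> a(1) N])
    finally show ?thesis .
  qed
  then show ?thesis using measure_entries_box_pos[OF \<sigma> a(1)] by blast
qed

lemma Bent_diag_pos:
  assumes "\<sigma> > 0" and "1 \<le> N"
  shows "0 < Bent N \<sigma> k k"
proof -
  obtain c where "c > 0" "\<And>k. c * 1 ^ k \<le> Bent N \<sigma> k k"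
    using Bent_diag_exp_growth[OF assms, of 1] by auto
  then show ?thesis by (metis power_one mult.right_neutral less_le_trans)
qed

lemma gram_le_am_gm:
  assumes t: "0 < t"
  shows "gram x N a b \<le> (t * gram x N a a + gram x N b b / t) / 2"
proof -
  have am_gm: "u * v \<le> (t * (u * u) + v * v / t) / 2" for u v :: real
  proof -
    have "0 \<le> (t * u - v)^2 / t" using t by simp
    also have "(t * u - v)^2 / t = t * (u * u) + v * v / t - 2 * (u * v)"
      using t by (simp add: power2_eq_square field_simps)
    finally show ?thesis by simp
  qed
  have "gram x N a b \<le> (\<Sum>i<N. (t * (moment_vec x N a i * moment_vec x N a i)
                            + moment_vec x N b i * moment_vec x N b i / t) / 2)"
    unfolding gram_def by (intro sum_mono am_gm)
  also have "\<dots> = (\<Sum>i<N. t * (moment_vec x N a i * moment_vec x N a i)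
                     + moment_vec x N b i * moment_vec x N b i / t) / 2"
    by (simp only: sum_divide_distrib)
  also have "\<dots> = (t * gram x N a a + gram x N b b / t) / 2"
    unfolding gram_def by (simp only: sum.distrib sum_distrib_left sum_divide_distrib)
  finally show ?thesis .
qed

lemma Bent_diag_log_convex:
  assumes \<sigma>: "\<sigma> > 0" and N: "1 \<le> N"
  shows "Bent N \<sigma> (Suc k) (Suc k) ^ 2 \<le> Bent N \<sigma> k k * Bent N \<sigma> (Suc (Suc k)) (Suc (Suc k))"
proof -
  let ?M = "gauss_entries N \<sigma>" and ?u = "\<lambda>k. Bent N \<sigma> k k"
  have pos: "0 < ?u k" for k by (rule Bent_diag_pos[OF \<sigma> N])
  define t where "t = ?u (Suc k) / ?u k"
  have t: "0 < t" unfolding t_def using pos by simp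
  text \<open>Minimising over t gives Cauchy-Schwarz; the AM-GM form avoids square roots.\<close>
  have "?u (Suc k) = Bent N \<sigma> k (Suc (Suc k))" by (rule Bent_hankel) simp
  also have "\<dots> \<le> (\<integral>x. (t * gram x N k k + gram x N (Suc (Suc k)) (Suc (Suc k)) / t) / 2 \<partial>?M)"
    unfolding Bent_eq_integral_gram using integrable_gram[OF \<sigma>]
    by (intro integral_mono gram_le_am_gm[OF t]) auto
  also have "\<dots> = (t * ?u k + ?u (Suc (Suc k)) / t) / 2"
    unfolding Bent_eq_integral_gram using integrable_gram[OF \<sigma>] by simp
  also have "t * ?u k = ?u (Suc k)" unfolding t_def using pos[of k] by simp
  finally have "?u (Suc k) \<le> ?u (Suc (Suc k)) / t" by simp
  also have "\<dots> = ?u k * ?u (Suc (Suc k)) / ?u (Suc k)"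
    unfolding t_def using pos[of k] by simp
  finally have "?u (Suc k) * ?u (Suc k) \<le> ?u k * ?u (Suc (Suc k))"
    by (simp only: pos_le_divide_eq[OF pos[of "Suc k"]])
  then show ?thesis by (simp only: power2_eq_square)
qed

section \<open>Log-convex sequences of superexponential growth\<close>

lemma log_convex_ratio_tendsto_top:
  fixes u :: "nat \<Rightarrow> real"
  assumes pos: "\<And>k. 0 < u k"
    and log_convex: "\<And>k. u (Suc k) ^ 2 \<le> u k * u (Suc (Suc k))"
    and growth: "\<And>C. 0 < C \<Longrightarrow> \<exists>c>0. \<forall>k. c * C ^ k \<le> u k"
  shows "filterlim (\<lambda>k. u (Suc k) / u k) at_top sequentially"
proof -
  define r where "r k = u (Suc k) / u k" for k
  have "r k \<le> r (Suc k)" for k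
    using log_convex[of k] pos[of k] pos[of "Suc k"]
    unfolding r_def by (simp add: divide_simps power2_eq_square mult.commute)
  then have mono: "incseq r" by (rule incseq_SucI)
  have unbounded: "\<exists>k. R < r k" for R
  proof (rule ccontr)
    assume "\<not> ?thesis"
    then have le: "r k \<le> R" for k by (simp add: not_less)
    have R: "0 < R" using le[of 0] pos unfolding r_def by (metis divide_pos_pos less_le_trans)
    have ub: "u k \<le> u 0 * R ^ k" for k
    proof (induction k)
      case (Suc k)
      have "u (Suc k) = r k * u k" unfolding r_def using pos[of k] by simp
      also have "\<dots> \<le> R * (u 0 * R ^ k)"
        using le[of k] Suc.IH pos[of k] R by (intro mult_mono) auto
      finally show ?case by (simp add: algebra_simps)
    qed simp
    obtain c where c: "0 < c" "\<And>k. c * (2 * R) ^ k \<le> u k" using growth[of "2 * R"] R by auto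
    obtain k where k: "u 0 / c < 2 ^ k" using real_arch_pow[of 2 "u 0 / c"] by auto
    have "c * 2 ^ k * R ^ k \<le> u 0 * R ^ k"
      using c(2)[of k] ub[of k] by (simp add: power_mult_distrib mult.assoc)
    then have "c * 2 ^ k \<le> u 0" using R by simp
    then show False using k c(1) by (simp add: divide_simps mult.commute)
  qed
  have "eventually (\<lambda>k. R \<le> r k) sequentially" for R
  proof -
    obtain k0 where "R < r k0" using unbounded by blast
    then show ?thesis unfolding eventually_sequentially
      using mono by (metis incseq_def less_le_trans order.strict_implies_order)
  qed
  then show ?thesis unfolding r_def filterlim_at_top by blast
qed

lemma partial_sum_over_last_tendsto_0:
  fixes u :: "nat \<Rightarrow> real"
  assumes pos: "\<And>k. 0 < u k"
    and ratio: "filterlim (\<lambda>k. u (Suc k) / u k) at_top sequentially"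
  shows "(\<lambda>T. (\<Sum>l<T. u l) / u T) \<longlonglongrightarrow> 0"
proof -
  define r where "r k = u (Suc k) / u k" for k
  define q where "q T = (\<Sum>l<T. u l) / u T" for T
  have q_nonneg: "0 \<le> q T" for T
    unfolding q_def using pos by (intro divide_nonneg_pos sum_nonneg) (auto intro: less_imp_le)
  have r_pos: "0 < r k" for k
    unfolding r_def using pos by simp
  have q_Suc: "q (Suc T) = (q T + 1) / r T" for T
    unfolding q_def r_def using pos[of T] pos[of "Suc T"] by (simp add: field_simps)
  obtain k0 where k0: "\<And>k. k \<ge> k0 \<Longrightarrow> 2 \<le> r k"
    using ratio unfolding r_def filterlim_at_top eventually_sequentially by blast
  define Q where "Q = max (q k0) 1"
  have q_bounded: "q T \<le> Q" if "T \<ge> k0" for T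
    using that
  proof (induction T rule: dec_induct)
    case (step T)
    have "q (Suc T) \<le> (q T + 1) / 2"
      unfolding q_Suc using k0[OF step.hyps(1)] q_nonneg[of T] by (intro divide_left_mono) auto
    also have "\<dots> \<le> Q" using step.IH by (simp add: Q_def)
    finally show ?case .
  qed (simp add: Q_def)
  have upper: "(\<lambda>T. (Q + 1) / r T) \<longlonglongrightarrow> 0"
    using ratio unfolding r_def by (intro tendsto_divide_0[OF tendsto_const] filterlim_at_top_imp_at_infinity)
  have below_upper: "eventually (\<lambda>T. q (Suc T) \<le> (Q + 1) / r T) sequentially"
    unfolding eventually_sequentially q_Suc
    using q_bounded r_pos by (intro exI[of _ k0] allI impI divide_right_mono) (auto intro: less_imp_le)
  have "(\<lambda>T. q (Suc T)) \<longlonglongrightarrow> 0"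
    by (rule tendsto_sandwich[OF always_eventually below_upper tendsto_const upper]) (simp add: q_nonneg)
  then show ?thesis unfolding q_def by (rule LIMSEQ_imp_Suc)
qed

lemma ratio_bounds_of_square_bound:
  fixes L S u q :: real
  assumes u: "0 < u" and q: "0 \<le> q" and S: "S = u * (1 + q)"
    and sq: "u * u \<le> L * S" and LS: "L \<le> S"
  shows "1 / (1 + q)^2 \<le> L / S" "L / S \<le> 1" "1 / (1 + q) \<le> L / u" "L / u \<le> 1 + q"
proof -
  have Sp: "0 < S" using S u q by simp
  have "u * u \<le> u * (L * (1 + q))" using sq S by (simp add: mult_ac)
  then have h: "u \<le> L * (1 + q)" using u by simp
  then have h2: "u * (1 + q) \<le> L * (1 + q) * (1 + q)" using q by (intro mult_right_mono) auto
  show "1 / (1 + q)^2 \<le> L / S" using h2 S Sp q by (simp add: divide_simps power2_eq_square mult_ac)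
  show "L / S \<le> 1" using LS Sp by simp
  show "1 / (1 + q) \<le> L / u" using h u q by (simp add: divide_simps mult_ac)
  show "L / u \<le> 1 + q" using LS S u by (simp add: divide_simps mult_ac)
qed

lemma dominant_term_ratios_tendsto_1:
  fixes u L :: "nat \<Rightarrow> real"
  assumes pos: "\<And>k. 0 < u k" and tail: "(\<lambda>T. (\<Sum>l<T. u l) / u T) \<longlonglongrightarrow> 0"
    and le: "\<And>T. L T \<le> (\<Sum>l\<le>T. u l)" and sq: "\<And>T. u T * u T \<le> L T * (\<Sum>l\<le>T. u l)"
  shows "(\<lambda>T. L T / (\<Sum>l\<le>T. u l)) \<longlonglongrightarrow> 1" "(\<lambda>T. L T / u T) \<longlonglongrightarrow> 1"
proof -
  define q where "q T = (\<Sum>l<T. u l) / u T" for T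
  have q_nonneg: "0 \<le> q T" for T
    unfolding q_def using pos by (intro divide_nonneg_pos sum_nonneg) (auto intro: less_imp_le)
  have "(\<Sum>l\<le>T. u l) = u T * (1 + q T)" for T
    unfolding q_def lessThan_Suc_atMost[symmetric] using pos[of T] by (simp add: field_simps)
  note bounds = ratio_bounds_of_square_bound[OF pos q_nonneg this sq le]
  have q: "(\<lambda>T. 1 + q T) \<longlonglongrightarrow> 1"
    using tendsto_add[OF tendsto_const tail, of 1] unfolding q_def by simp
  have lower1: "(\<lambda>T. 1 / (1 + q T)^2) \<longlonglongrightarrow> 1" and lower2: "(\<lambda>T. 1 / (1 + q T)) \<longlonglongrightarrow> 1"
    using tendsto_divide[OF tendsto_const tendsto_power[OF q, of 2], of 1]
      tendsto_divide[OF tendsto_const q, of 1] by simp_all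
  show "(\<lambda>T. L T / (\<Sum>l\<le>T. u l)) \<longlonglongrightarrow> 1"
    by (rule tendsto_sandwich[OF _ _ lower1 tendsto_const]) (simp_all add: bounds)
  show "(\<lambda>T. L T / u T) \<longlonglongrightarrow> 1"
    by (rule tendsto_sandwich[OF _ _ lower2 q]) (simp_all add: bounds)
qed

section \<open>Spectral bounds for symmetric positive semidefinite matrices\<close>

definition mat_trace :: "'a::comm_ring_1 mat \<Rightarrow> 'a" where
  "mat_trace A = (\<Sum>i<dim_row A. A $$ (i, i))"

lemma index_mult_mat_lessThan:
  assumes "A \<in> carrier_mat n m" "B \<in> carrier_mat m k" "i < n" "j < k"
  shows "(A * B) $$ (i, j) = (\<Sum>l<m. A $$ (i, l) * B $$ (l, j))"
  using assms by (simp add: scalar_prod_def atLeast0LessThan)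

lemma index_mult_mat_vec_lessThan:
  assumes "A \<in> carrier_mat n m" "v \<in> carrier_vec m" "i < n"
  shows "(A *\<^sub>v v) $ i = (\<Sum>l<m. A $$ (i, l) * v $ l)"
  using assms by (simp add: scalar_prod_def atLeast0LessThan)

lemma mat_trace_mult:
  assumes A: "A \<in> carrier_mat n m" and B: "B \<in> carrier_mat m n"
  shows "mat_trace (A * B) = (\<Sum>i<n. \<Sum>l<m. A $$ (i, l) * B $$ (l, i))"
  unfolding mat_trace_def using A
  by (simp, intro sum.cong[OF refl] index_mult_mat_lessThan[OF A B]) auto

lemma mat_trace_mult_comm:
  fixes A B :: "'a::comm_ring_1 mat"
  assumes A: "A \<in> carrier_mat n m" and B: "B \<in> carrier_mat m n"
  shows "mat_trace (A * B) = mat_trace (B * A)"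
  unfolding mat_trace_mult[OF A B] mat_trace_mult[OF B A]
  by (subst sum.swap) (simp add: mult.commute)

lemma mat_trace_similar:
  fixes A B P Q :: "'a::comm_ring_1 mat"
  assumes "similar_mat_wit A B P Q" "A \<in> carrier_mat n n"
  shows "mat_trace A = mat_trace B"
proof -
  from assms have B: "B \<in> carrier_mat n n" and P: "P \<in> carrier_mat n n" and Q: "Q \<in> carrier_mat n n"
    and QP: "Q * P = 1\<^sub>m n" and AE: "A = P * B * Q"
    unfolding similar_mat_wit_def Let_def by auto
  have "mat_trace A = mat_trace ((P * B) * Q)" using AE by simp
  also have "\<dots> = mat_trace (Q * (P * B))" by (rule mat_trace_mult_comm[of _ n n]) (use P B Q in auto)
  also have "Q * (P * B) = (Q * P) * B" using P B Q by simp
  also have "\<dots> = B" using QP B by simp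
  finally show ?thesis .
qed

lemma similar_mat_wit_square:
  fixes A B P Q :: "'a::comm_ring_1 mat"
  assumes "similar_mat_wit A B P Q" "A \<in> carrier_mat n n"
  shows "similar_mat_wit (A * A) (B * B) P Q"
proof -
  from assms have B: "B \<in> carrier_mat n n" and P: "P \<in> carrier_mat n n" and Q: "Q \<in> carrier_mat n n"
    and QP: "Q * P = 1\<^sub>m n" and PQ: "P * Q = 1\<^sub>m n" and AE: "A = P * B * Q"
    unfolding similar_mat_wit_def Let_def by auto
  have "A * A = P * B * (Q * P) * B * Q" using AE P B Q by (simp add: assoc_mult_mat[of _ n n _ n _ n])
  also have "\<dots> = P * (B * B) * Q" using QP P B Q by (simp add: assoc_mult_mat[of _ n n _ n _ n])
  finally show ?thesis unfolding similar_mat_wit_def Let_def using P Q B QP PQ assms(2) by auto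
qed

lemma upper_triangular_square_diag:
  fixes B :: "'a::comm_ring_1 mat"
  assumes B: "B \<in> carrier_mat n n" and ut: "upper_triangular B" and i: "i < n"
  shows "(B * B) $$ (i, i) = B $$ (i, i) * B $$ (i, i)"
proof -
  have "(B * B) $$ (i, i) = (\<Sum>l<n. B $$ (i, l) * B $$ (l, i))" by (rule index_mult_mat_lessThan[OF B B i i])
  also have "\<dots> = B $$ (i, i) * B $$ (i, i) + (\<Sum>l\<in>{..<n}-{i}. B $$ (i, l) * B $$ (l, i))"
    using i by (simp add: sum.remove)
  also have "(\<Sum>l\<in>{..<n}-{i}. B $$ (i, l) * B $$ (l, i)) = 0"
  proof (rule sum.neutral, intro ballI)
    fix l assume l: "l \<in> {..<n}-{i}"
    show "B $$ (i, l) * B $$ (l, i) = 0"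
    proof (cases "l < i")
      case True then show ?thesis using ut i B unfolding upper_triangular_def by auto
    next
      case False then have "i < l" using l by auto
      then show ?thesis using ut l B unfolding upper_triangular_def by auto
    qed
  qed
  finally show ?thesis by simp
qed

lemma eigenvalues_eq_roots:
  fixes A :: "real mat"
  assumes A: "A \<in> carrier_mat n n" and cp: "char_poly A = (\<Prod>e\<leftarrow>es. [:- e, 1:])"
  shows "{k. eigenvalue A k} = set es"
proof -
  have "eigenvalue A k \<longleftrightarrow> k \<in> set es" for k
    unfolding eigenvalue_root_char_poly[OF A] cp poly_prod_list
    by (auto simp: prod_list_zero_iff o_def image_iff)
  then show ?thesis by auto
qed

lemma order_prod_linear_factors:
  fixes es :: "real list"
  shows "Polynomial.order k (\<Prod>e\<leftarrow>es. [:- e, 1:]) = count_list es k"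
proof (induction es)
  case Nil then show ?case by simp
next
  case (Cons e es)
  have nz: "(\<Prod>e\<leftarrow>es. [:- e, 1:]) \<noteq> 0" by (auto simp: prod_list_zero_iff image_iff)
  have "Polynomial.order k ([:- e, 1:] * (\<Prod>e\<leftarrow>es. [:- e, 1:])) = Polynomial.order k [:- e, 1:] + Polynomial.order k (\<Prod>e\<leftarrow>es. [:- e, 1:])"
  proof (rule order_mult)
    show "[:- e, 1:] * (\<Prod>e\<leftarrow>es. [:- e, 1:]) \<noteq> 0" using nz by (simp only: mult_eq_0_iff) simp
  qed
  moreover have "Polynomial.order k [:- e, 1:] = (if k = e then 1 else 0)"
  proof (cases "k = e")
    case True then show ?thesis using order_power_n_n[of k 1] by simp
  next
    case False
    have "Polynomial.order k [:- e, 1:] = 0" by (rule order_0I) (use False in simp)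
    then show ?thesis using False by simp
  qed
  ultimately show ?case using Cons.IH by simp
qed

lemma sum_list_eq_sum_count_list: "sum_list (xs :: real list) = (\<Sum>k\<in>set xs. of_nat (count_list xs k) * k)"
proof (induction xs)
  case Nil then show ?case by simp
next
  case (Cons x xs)
  have 1: "(\<Sum>k\<in>insert x (set xs). of_nat (count_list xs k) * k) = (\<Sum>k\<in>set xs. of_nat (count_list xs k) * k)"
    by (cases "x \<in> set xs") (auto simp: insert_absorb count_list_0_iff)
  have 2: "(\<Sum>k\<in>insert x (set xs). if x = k then k else 0) = x"
    by (simp add: sum.delta)
  have "(\<Sum>k\<in>set (x # xs). of_nat (count_list (x # xs) k) * k)
      = (\<Sum>k\<in>insert x (set xs). of_nat (count_list xs k) * k + (if x = k then k else 0))"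
    by (intro sum.cong) (auto simp: algebra_simps)
  also have "\<dots> = x + sum_list xs" unfolding sum.distrib 1 2 Cons.IH by simp
  finally show ?case by simp
qed

lemma eig_sum_eq_sum_list:
  fixes A :: "real mat"
  assumes A: "A \<in> carrier_mat n n" and cp: "char_poly A = (\<Prod>e\<leftarrow>es. [:- e, 1:])"
  shows "eig_sum A = sum_list es"
proof -
  have "eig_sum A = (\<Sum>k\<in>set es. of_nat (count_list es k) * k)"
    unfolding eig_sum_def eigenvalues_eq_roots[OF A cp] cp order_prod_linear_factors ..
  also have "\<dots> = sum_list es" by (rule sum_list_eq_sum_count_list[symmetric])
  finally show ?thesis .
qed

lemma sum_list_roots_eq_traces:
  fixes A :: "real mat"
  assumes A: "A \<in> carrier_mat n n" and cp: "char_poly A = (\<Prod>e\<leftarrow>es. [:- e, 1:])"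
  shows "sum_list es = mat_trace A" "sum_list (map (\<lambda>e. e * e) es) = mat_trace (A * A)"
proof -
  obtain B P Q where sd: "schur_decomposition A es = (B, P, Q)" by (cases "schur_decomposition A es") auto
  from schur_decomposition[OF A cp sd] have sim: "similar_mat_wit A B P Q" and ut: "upper_triangular B"
    and dg: "diag_mat B = es" by auto
  have B: "B \<in> carrier_mat n n" using sim A unfolding similar_mat_wit_def Let_def by auto
  have es: "es = map (\<lambda>i. B $$ (i, i)) [0..<n]" using dg B unfolding diag_mat_def by auto
  have "sum_list es = mat_trace B"
    unfolding es mat_trace_def using B
    by (simp add: interv_sum_list_conv_sum_set_nat atLeast0LessThan)
  then show "sum_list es = mat_trace A" using mat_trace_similar[OF sim A] by simp
  have "sum_list (map (\<lambda>e. e * e) es) = (\<Sum>i<n. B $$ (i, i) * B $$ (i, i))"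
    unfolding es by (simp add: interv_sum_list_conv_sum_set_nat atLeast0LessThan o_def)
  also have "\<dots> = mat_trace (B * B)" unfolding mat_trace_def using B upper_triangular_square_diag[OF B ut] by simp
  also have "\<dots> = mat_trace (A * A)"
    using mat_trace_similar[OF similar_mat_wit_square[OF sim A], of n] A by simp
  finally show "sum_list (map (\<lambda>e. e * e) es) = mat_trace (A * A)" .
qed

lemma cnj_symmetric_form:
  fixes A :: "real mat" and v :: "complex vec"
  assumes sym: "\<And>i j. i < n \<Longrightarrow> j < n \<Longrightarrow> A $$ (i, j) = A $$ (j, i)"
  shows "cnj (\<Sum>i<n. \<Sum>j<n. cnj (v $ i) * complex_of_real (A $$ (i, j)) * v $ j)
       = (\<Sum>i<n. \<Sum>j<n. cnj (v $ i) * complex_of_real (A $$ (i, j)) * v $ j)"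
proof -
  have "cnj (\<Sum>i<n. \<Sum>j<n. cnj (v $ i) * complex_of_real (A $$ (i, j)) * v $ j)
      = (\<Sum>j<n. \<Sum>i<n. v $ i * complex_of_real (A $$ (i, j)) * cnj (v $ j))"
    by (simp add: cnj_sum) (rule sum.swap)
  also have "\<dots> = (\<Sum>i<n. \<Sum>j<n. cnj (v $ i) * complex_of_real (A $$ (i, j)) * v $ j)"
    by (intro sum.cong refl) (simp add: sym mult_ac)
  finally show ?thesis .
qed

lemma eigenvector_form_eq:
  fixes A :: "real mat"
  assumes A: "A \<in> carrier_mat n n" and v: "eigenvector (map_mat complex_of_real A) v a"
  shows "(\<Sum>i<n. \<Sum>j<n. cnj (v $ i) * complex_of_real (A $$ (i, j)) * v $ j)
       = a * complex_of_real (\<Sum>i<n. (cmod (v $ i))^2)"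
proof -
  let ?C = "map_mat complex_of_real A"
  have C: "?C \<in> carrier_mat n n" using A by simp
  have vc: "v \<in> carrier_vec n" and Cv: "?C *\<^sub>v v = a \<cdot>\<^sub>v v"
    using v C unfolding eigenvector_def by auto
  have Cv_i: "(\<Sum>j<n. complex_of_real (A $$ (i, j)) * v $ j) = a * v $ i" if i: "i < n" for i
  proof -
    have "(?C *\<^sub>v v) $ i = (\<Sum>j<n. ?C $$ (i, j) * v $ j)" by (rule index_mult_mat_vec_lessThan[OF C vc i])
    also have "\<dots> = (\<Sum>j<n. complex_of_real (A $$ (i, j)) * v $ j)"
      by (rule sum.cong[OF refl]) (use A i in auto)
    finally show ?thesis using Cv i vc by simp
  qed
  have "(\<Sum>i<n. \<Sum>j<n. cnj (v $ i) * complex_of_real (A $$ (i, j)) * v $ j)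
      = (\<Sum>i<n. cnj (v $ i) * (\<Sum>j<n. complex_of_real (A $$ (i, j)) * v $ j))"
    by (simp add: sum_distrib_left mult.assoc)
  also have "\<dots> = (\<Sum>i<n. a * (v $ i * cnj (v $ i)))"
  proof (rule sum.cong[OF refl])
    fix i assume "i \<in> {..<n}"
    then show "cnj (v $ i) * (\<Sum>j<n. complex_of_real (A $$ (i, j)) * v $ j) = a * (v $ i * cnj (v $ i))"
      by (simp only: Cv_i lessThan_iff) (simp add: mult_ac)
  qed
  also have "\<dots> = a * complex_of_real (\<Sum>i<n. (cmod (v $ i))^2)"
  proof -
    have "z * cnj z = (complex_of_real (cmod z))^2" for z
      by (metis complex_norm_square of_real_power)
    then show ?thesis by (simp add: sum_distrib_left of_real_sum)
  qed
  finally show ?thesis .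
qed

lemma symmetric_eigenvalue_real:
  fixes A :: "real mat"
  assumes A: "A \<in> carrier_mat n n" and sym: "\<And>i j. i < n \<Longrightarrow> j < n \<Longrightarrow> A $$ (i, j) = A $$ (j, i)"
    and ev: "eigenvalue (map_mat complex_of_real A) a"
  shows "a = complex_of_real (Re a)"
proof -
  obtain v where v: "eigenvector (map_mat complex_of_real A) v a" using ev unfolding eigenvalue_def by blast
  have vc: "v \<in> carrier_vec n" and v0: "v \<noteq> 0\<^sub>v n"
    using v A unfolding eigenvector_def by auto
  define r where "r = (\<Sum>i<n. (cmod (v $ i))^2)"
  have r: "r > 0"
  proof -
    obtain i where i: "i < n" "v $ i \<noteq> 0" using v0 vc by (metis eq_vecI carrier_vecD index_zero_vec)
    have "(cmod (v $ i))^2 \<le> r" unfolding r_def using i by (intro member_le_sum) auto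
    moreover have "0 < (cmod (v $ i))^2" using i by simp
    ultimately show ?thesis by linarith
  qed
  define s where "s = (\<Sum>i<n. \<Sum>j<n. cnj (v $ i) * complex_of_real (A $$ (i, j)) * v $ j)"
  have s: "s = a * complex_of_real r"
    unfolding s_def r_def by (rule eigenvector_form_eq[OF A v])
  have "cnj s = s"
    unfolding s_def by (rule cnj_symmetric_form[OF sym])
  then have "cnj a * complex_of_real r = a * complex_of_real r"
    unfolding s by simp
  then have "cnj a = a" using r by simp
  then show ?thesis by (metis Reals_cnj_iff complex_is_Real_iff of_real_Re)
qed

lemma map_poly_of_real_linear_factors:
  assumes "\<And>a. a \<in> set as \<Longrightarrow> a = complex_of_real (Re a)"
  shows "map_poly complex_of_real (\<Prod>e\<leftarrow>map Re as. [:- e, 1:]) = (\<Prod>a\<leftarrow>as. [:- a, 1:])"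
  using assms
proof (induction as)
  case (Cons a as)
  interpret mp: map_poly_comm_ring_hom complex_of_real ..
  have "map_poly complex_of_real (\<Prod>e\<leftarrow>map Re (a # as). [:- e, 1:])
     = map_poly complex_of_real [:- Re a, 1:] * map_poly complex_of_real (\<Prod>e\<leftarrow>map Re as. [:- e, 1:])"
    by (simp only: list.map prod_list.Cons mp.hom_mult)
  also have "map_poly complex_of_real [:- Re a, 1:] = [:- a, 1:]"
    using Cons.prems[of a] by (simp add: map_poly_pCons)
  also have "map_poly complex_of_real (\<Prod>e\<leftarrow>map Re as. [:- e, 1:]) = (\<Prod>a\<leftarrow>as. [:- a, 1:])"
    using Cons by simp
  finally show ?case by simp
qed simp

lemma symmetric_char_poly_splits:
  fixes A :: "real mat"
  assumes A: "A \<in> carrier_mat n n" and sym: "\<And>i j. i < n \<Longrightarrow> j < n \<Longrightarrow> A $$ (i, j) = A $$ (j, i)"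
  shows "\<exists>es. char_poly A = (\<Prod>e\<leftarrow>es. [:- e, 1:]) \<and> length es = n"
proof -
  interpret mp: map_poly_inj_comm_ring_hom complex_of_real ..
  let ?C = "map_mat complex_of_real A"
  have C: "?C \<in> carrier_mat n n" using A by simp
  obtain as where cp: "char_poly ?C = (\<Prod>a\<leftarrow>as. [:- a, 1:])" and len: "length as = n"
    using char_poly_factorized[OF C] by blast
  have real: "a = complex_of_real (Re a)" if a: "a \<in> set as" for a
  proof (rule symmetric_eigenvalue_real[OF A sym])
    show "eigenvalue ?C a" unfolding eigenvalue_root_char_poly[OF C] cp poly_prod_list
      using a by (auto simp: prod_list_zero_iff o_def image_iff)
  qed
  have "map_poly complex_of_real (char_poly A) = char_poly ?C"
    by (rule of_real_hom.char_poly_hom[OF A, symmetric])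
  also have "\<dots> = map_poly complex_of_real (\<Prod>e\<leftarrow>map Re as. [:- e, 1:])"
    unfolding cp by (rule map_poly_of_real_linear_factors[symmetric]) (rule real)
  finally have "map_poly complex_of_real (char_poly A) = map_poly complex_of_real (\<Prod>e\<leftarrow>map Re as. [:- e, 1:])" .
  then have "char_poly A = (\<Prod>e\<leftarrow>map Re as. [:- e, 1:])" by (simp only: mp.eq_iff)
  with len show ?thesis by (intro exI[of _ "map Re as"]) simp
qed

lemma psd_eigenvalue_nonneg:
  fixes A :: "real mat"
  assumes A: "A \<in> carrier_mat n n" and psd: "\<And>v. v \<in> carrier_vec n \<Longrightarrow> 0 \<le> v \<bullet> (A *\<^sub>v v)"
    and e: "eigenvalue A e"
  shows "0 \<le> e"
proof -
  obtain v where v: "eigenvector A v e" using e unfolding eigenvalue_def by blast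
  have vc: "v \<in> carrier_vec n" and v0: "v \<noteq> 0\<^sub>v n" and Av: "A *\<^sub>v v = e \<cdot>\<^sub>v v"
    using v A unfolding eigenvector_def by auto
  have "v \<bullet> (A *\<^sub>v v) = e * (v \<bullet> v)" unfolding Av using vc by simp
  moreover have "0 < v \<bullet> v"
  proof -
    obtain i where i: "i < n" "v $ i \<noteq> 0" using v0 vc by (metis eq_vecI carrier_vecD index_zero_vec)
    have "v \<bullet> v = (\<Sum>j<n. v $ j * v $ j)" using vc by (simp add: scalar_prod_def atLeast0LessThan)
    moreover have "v $ i * v $ i \<le> (\<Sum>j<n. v $ j * v $ j)" using i by (intro member_le_sum) auto
    moreover have "0 < v $ i * v $ i" using i(2) not_real_square_gt_zero by blast
    ultimately show ?thesis by linarith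
  qed
  ultimately show ?thesis using psd[OF vc] by (simp add: zero_le_mult_iff)
qed

lemma eig_sum_eq_mat_trace:
  fixes A :: "real mat"
  assumes A: "A \<in> carrier_mat n n" and sym: "\<And>i j. i < n \<Longrightarrow> j < n \<Longrightarrow> A $$ (i, j) = A $$ (j, i)"
  shows "eig_sum A = mat_trace A"
proof -
  obtain es where cp: "char_poly A = (\<Prod>e\<leftarrow>es. [:- e, 1:])"
    using symmetric_char_poly_splits[OF A sym] by blast
  show ?thesis
    unfolding eig_sum_eq_sum_list[OF A cp] by (rule sum_list_roots_eq_traces(1)[OF A cp])
qed

lemma psd_spectral_bounds:
  fixes A :: "real mat"
  assumes A: "A \<in> carrier_mat n n" and i: "i < n"
    and sym: "\<And>i j. i < n \<Longrightarrow> j < n \<Longrightarrow> A $$ (i, j) = A $$ (j, i)"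
    and psd: "\<And>v. v \<in> carrier_vec n \<Longrightarrow> 0 \<le> v \<bullet> (A *\<^sub>v v)"
  shows "lambda_max A \<le> eig_sum A" "A $$ (i, i) * A $$ (i, i) \<le> lambda_max A * eig_sum A"
proof -
  obtain es where cp: "char_poly A = (\<Prod>e\<leftarrow>es. [:- e, 1:])" and len: "length es = n"
    using symmetric_char_poly_splits[OF A sym] by blast
  have lambda_max: "lambda_max A = Max (set es)"
    unfolding lambda_max_def eigenvalues_eq_roots[OF A cp] ..
  have sum: "eig_sum A = sum_list es" by (rule eig_sum_eq_sum_list[OF A cp])
  have nonneg: "0 \<le> e" if "e \<in> set es" for e
    using psd_eigenvalue_nonneg[OF A psd] that eigenvalues_eq_roots[OF A cp] by blast
  have Max_in: "Max (set es) \<in> set es" using len i by (intro Max_in) auto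
  show "lambda_max A \<le> eig_sum A" unfolding lambda_max sum
    using Max_in nonneg by (intro member_le_sum_list) auto
  text \<open>A(i,i)^2 is one term of tr(A^2) = sum of e^2, and e^2 \<le> (max e) e for e \<ge> 0.\<close>
  have "A $$ (i, i) * A $$ (i, i) \<le> (\<Sum>k<n. A $$ (i, k) * A $$ (k, i))"
    using i sym by (intro member_le_sum[where f="\<lambda>k. A $$ (i, k) * A $$ (k, i)"]) auto
  also have "\<dots> \<le> (\<Sum>j<n. \<Sum>k<n. A $$ (j, k) * A $$ (k, j))"
    using i sym by (intro member_le_sum[where f="\<lambda>j. \<Sum>k<n. A $$ (j, k) * A $$ (k, j)"] sum_nonneg) auto
  also have "\<dots> = mat_trace (A * A)" by (rule mat_trace_mult[OF A A, symmetric])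
  also have "\<dots> = sum_list (map (\<lambda>e. e * e) es)" by (rule sum_list_roots_eq_traces(2)[OF A cp, symmetric])
  also have "\<dots> \<le> sum_list (map (\<lambda>e. Max (set es) * e) es)"
    using nonneg by (intro sum_list_mono mult_right_mono) auto
  also have "\<dots> = lambda_max A * eig_sum A" by (simp add: lambda_max sum sum_list_const_mult)
  finally show "A $$ (i, i) * A $$ (i, i) \<le> lambda_max A * eig_sum A" .
qed

lemma Bmat_carrier: "Bmat T N \<sigma> \<in> carrier_mat (Suc T) (Suc T)"
  unfolding Bmat_def by simp

lemma Bmat_index: "i < Suc T \<Longrightarrow> j < Suc T \<Longrightarrow> Bmat T N \<sigma> $$ (i, j) = Bent N \<sigma> i j"
  unfolding Bmat_def by simp

lemma Bmat_symmetric: "i < Suc T \<Longrightarrow> j < Suc T \<Longrightarrow> Bmat T N \<sigma> $$ (i, j) = Bmat T N \<sigma> $$ (j, i)"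
  by (simp add: Bmat_index Bent_hankel[of i j j i])

lemma gram_quadratic_form_nonneg:
  fixes c :: "nat \<Rightarrow> real"
  shows "0 \<le> (\<Sum>i<n. \<Sum>j<n. c i * c j * gram x N i j)"
proof -
  have "(\<Sum>i<n. \<Sum>j<n. c i * c j * gram x N i j)
      = (\<Sum>l<N. (\<Sum>i<n. c i * moment_vec x N i l) * (\<Sum>j<n. c j * moment_vec x N j l))"
    unfolding gram_def sum_product sum_distrib_left
    by (subst sum.swap, subst (2) sum.swap) (simp add: mult_ac sum_distrib_left)
  also have "\<dots> \<ge> 0" by (intro sum_nonneg) simp
  finally show ?thesis .
qed

lemma Bmat_quadratic_form:
  assumes \<sigma>: "\<sigma> > 0" and v: "v \<in> carrier_vec (Suc T)"
  shows "v \<bullet> (Bmat T N \<sigma> *\<^sub>v v)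
       = (\<integral>x. (\<Sum>i<Suc T. \<Sum>j<Suc T. v $ i * v $ j * gram x N i j) \<partial>gauss_entries N \<sigma>)"
proof -
  let ?M = "gauss_entries N \<sigma>"
  have Bv: "(Bmat T N \<sigma> *\<^sub>v v) $ i = (\<Sum>j<Suc T. Bent N \<sigma> i j * v $ j)" if "i < Suc T" for i
    using that by (simp add: index_mult_mat_vec_lessThan[OF Bmat_carrier v] Bmat_index del: sum.lessThan_Suc)
  have "v \<bullet> (Bmat T N \<sigma> *\<^sub>v v) = (\<Sum>i<Suc T. v $ i * (Bmat T N \<sigma> *\<^sub>v v) $ i)"
    using Bmat_carrier[of T N \<sigma>] by (simp add: scalar_prod_def atLeast0LessThan del: sum.lessThan_Suc)
  also have "\<dots> = (\<Sum>i<Suc T. \<Sum>j<Suc T. v $ i * v $ j * Bent N \<sigma> i j)"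
    by (intro sum.cong refl) (simp add: Bv sum_distrib_left mult_ac del: sum.lessThan_Suc)
  also have "\<dots> = (\<Sum>i<Suc T. \<Sum>j<Suc T. (\<integral>x. v $ i * v $ j * gram x N i j \<partial>?M))"
    unfolding Bent_eq_integral_gram by simp
  also have "\<dots> = (\<integral>x. (\<Sum>i<Suc T. \<Sum>j<Suc T. v $ i * v $ j * gram x N i j) \<partial>?M)"
    using integrable_gram[OF \<sigma>]
    by (simp add: Bochner_Integration.integral_sum Bochner_Integration.integrable_sum del: sum.lessThan_Suc)
  finally show ?thesis .
qed

lemma Bmat_psd:
  assumes \<sigma>: "\<sigma> > 0" and v: "v \<in> carrier_vec (Suc T)"
  shows "0 \<le> v \<bullet> (Bmat T N \<sigma> *\<^sub>v v)"
  unfolding Bmat_quadratic_form[OF assms]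
  by (intro integral_nonneg_AE AE_I2 gram_quadratic_form_nonneg)

lemma eig_sum_Bmat: "eig_sum (Bmat T N \<sigma>) = (\<Sum>l\<le>T. Bent N \<sigma> l l)"
proof -
  have "eig_sum (Bmat T N \<sigma>) = mat_trace (Bmat T N \<sigma>)"
    by (rule eig_sum_eq_mat_trace[OF Bmat_carrier Bmat_symmetric])
  also have "\<dots> = (\<Sum>l\<le>T. Bent N \<sigma> l l)"
    unfolding mat_trace_def lessThan_Suc_atMost[symmetric]
    by (simp add: Bmat_def del: sum.lessThan_Suc)
  finally show ?thesis .
qed

lemma Bmat_spectral_bounds:
  assumes \<sigma>: "\<sigma> > 0"
  shows "lambda_max (Bmat T N \<sigma>) \<le> eig_sum (Bmat T N \<sigma>)"
    and "Bent N \<sigma> T T * Bent N \<sigma> T T \<le> lambda_max (Bmat T N \<sigma>) * eig_sum (Bmat T N \<sigma>)"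
  using psd_spectral_bounds[OF Bmat_carrier lessI Bmat_symmetric Bmat_psd[OF \<sigma>]]
  by (simp_all add: Bmat_index)

theorem mainTheorem10:
  fixes N :: nat and \<sigma> :: real
  assumes "N \<ge> 1" and "\<sigma> > 0"
  shows "((\<lambda>T. lambda_max (Bmat T N \<sigma>) / eig_sum (Bmat T N \<sigma>)) \<longlongrightarrow> 1) at_top
       \<and> ((\<lambda>T. lambda_max (Bmat T N \<sigma>) / Bent N \<sigma> T T) \<longlongrightarrow> 1) at_top"
proof -
  define u where "u k = Bent N \<sigma> k k" for k
  define L where "L T = lambda_max (Bmat T N \<sigma>)" for T
  have pos: "0 < u k" for k
    unfolding u_def using assms by (simp add: Bent_diag_pos)
  have log_convex: "u (Suc k) ^ 2 \<le> u k * u (Suc (Suc k))" for k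
    unfolding u_def by (rule Bent_diag_log_convex[OF assms(2,1)])
  have growth: "\<exists>c>0. \<forall>k. c * C ^ k \<le> u k" if "0 < C" for C
    unfolding u_def by (rule Bent_diag_exp_growth[OF assms(2,1) that])
  have tail: "(\<lambda>T. (\<Sum>l<T. u l) / u T) \<longlonglongrightarrow> 0"
    by (rule partial_sum_over_last_tendsto_0[OF pos log_convex_ratio_tendsto_top[OF pos log_convex growth]])
  have trace: "eig_sum (Bmat T N \<sigma>) = (\<Sum>l\<le>T. u l)" for T
    unfolding u_def by (rule eig_sum_Bmat)
  have "L T \<le> (\<Sum>l\<le>T. u l)" "u T * u T \<le> L T * (\<Sum>l\<le>T. u l)" for T
    using Bmat_spectral_bounds[OF assms(2), where T=T and N=N] unfolding L_def trace u_def by simp_all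
  note ratios = dominant_term_ratios_tendsto_1[OF pos tail this]
  show ?thesis
    using ratios unfolding L_def trace u_def by simp
qed
end
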